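(* There exists a constant $C=C(\underline h,\overline h,\underline w,\overline w)>0$ such that for every grid size $N\in\mathbb{N}$ there exists a ReLU FNO $\mathcal{N}^{\mathrm{FNO}}$ with constant (in $x$) output function, $k_{\max}=0$, $d_v\le C$, depth $\le C$, size $\le C$, such that for every input $\bar u=h\,1_{[-w/2,w/2]}(\cdot-\xi)$ with $h\in[\underline h,\overline h]$, $w\in[\underline w,\overline w]$, $\xi\in[0,2\pi]$, \[ \big|\mathcal{N}^{\mathrm{FNO}}(\bar u)(x)-w\big|\le\frac CN\quad\text{for all }x\in\mathbb{T}. \]
   Context: $\mathbb{T}=\mathbb{R}/2\pi\mathbb{Z}$; $0<\underline h<\overline h$, $0<\underline w<\overline w<2\pi$; $1_{[-w/2,w/2]}$ is periodized. FNO with grid size $N$: $x_j=2\pi j/N$, $\mathcal{F}_Nv(k)=\frac1N\sum_{j=1}^Nv(x_j)e^{-ikx_j}$; an FNO with lifting dimension $d_v$, cut-off $k_{\max}$, depth $L$, ReLU $\sigma$ is $Q\circ\mathcal{L}_L\circ\dots\circ\mathcal{L}_1\circ R$, $(R\bar u)(x)=R(\bar u(x),x)$ ($R$ a shallow ReLU network into $\mathbb{R}^{d_v}$), $(\mathcal{L}_\ell v)(x)=\sigma(W_\ell v(x)+b_\ell(x)+\sum_{|k|\le k_{\max}}P_\ell(k)\mathcal{F}_Nv(k)e^{ikx})$ with $W_\ell\in\mathbb{R}^{d_v\times d_v}$, $P_\ell(k)\in\mathbb{C}^{d_v\times d_v}$, real bias $b_\ell(x)=\sum_{|k|\le k_{\max}}\hat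 b_\ell(k)e^{ikx}$, $Q$ linear pointwise. Depth $=L$; size = number of tunable parameters. *)

theory Defs
  imports Complex_Main
begin

definition relu :: "real \<Rightarrow> real" where
  "relu t = max 0 t"

text \<open>Vectors in R^d are functions nat => real (only indices < d matter),
  matrices are functions nat => nat => real.
  Lifting R(u,x) = B relu(A (u,x) + a) + c is a shallow ReLU network with hidden width
  fno_width; A is width x 2, a has width entries, B is d_v x width, c has d_v entries.
  Each layer is (W, P, bhat): W is d_v x d_v real, P k is d_v x d_v complex,
  bhat k is the k-th Fourier coefficient (a complex vector) of the bias.\<close>
record fno =
  fno_dv :: nat
  fno_kmax :: nat
  fno_width :: nat
  fno_A :: "nat \<Rightarrow> nat \<Rightarrow> real"
  fno_a :: "nat \<Rightarrow> real"
  fno_B :: "nat \<Rightarrow> nat \<Rightarrow> real"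
  fno_c :: "nat \<Rightarrow> real"
  fno_layers :: "((nat \<Rightarrow> nat \<Rightarrow> real) \<times> (int \<Rightarrow> nat \<Rightarrow> nat \<Rightarrow> complex) \<times> (int \<Rightarrow> nat \<Rightarrow> complex)) list"
  fno_Q :: "nat \<Rightarrow> real"

definition grid_pt :: "nat \<Rightarrow> nat \<Rightarrow> real" where
  "grid_pt N j = 2 * pi * real j / real N"

definition dft :: "nat \<Rightarrow> (real \<Rightarrow> real) \<Rightarrow> int \<Rightarrow> complex" where
  "dft N v k = (1 / of_nat N) *
     (\<Sum>j = 1..N. complex_of_real (v (grid_pt N j)) * exp (- \<i> * of_int k * complex_of_real (grid_pt N j)))"

definition fno_lift :: "fno \<Rightarrow> (real \<Rightarrow> real) \<Rightarrow> real \<Rightarrow> nat \<Rightarrow> real" where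
  "fno_lift F u x i =
     (\<Sum>j<fno_width F. fno_B F i j * relu (fno_A F j 0 * u x + fno_A F j 1 * x + fno_a F j)) + fno_c F i"

definition fno_layer ::
  "nat \<Rightarrow> nat \<Rightarrow> nat \<Rightarrow> ((nat \<Rightarrow> nat \<Rightarrow> real) \<times> (int \<Rightarrow> nat \<Rightarrow> nat \<Rightarrow> complex) \<times> (int \<Rightarrow> nat \<Rightarrow> complex))
     \<Rightarrow> (real \<Rightarrow> nat \<Rightarrow> real) \<Rightarrow> real \<Rightarrow> nat \<Rightarrow> real" where
  "fno_layer dv kmax N l v x i =
     (case l of (W, P, bh) \<Rightarrow>
       relu ((\<Sum>j<dv. W i j * v x j) +
             Re (\<Sum>k\<in>{- int kmax..int kmax}.
                   (bh k i + (\<Sum>j<dv. P k i j * dft N (\<lambda>y. v y j) k))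
                   * exp (\<i> * of_int k * complex_of_real x))))"

definition fno_eval :: "fno \<Rightarrow> nat \<Rightarrow> (real \<Rightarrow> real) \<Rightarrow> real \<Rightarrow> real" where
  "fno_eval F N u x =
     (let v = foldl (\<lambda>v l. fno_layer (fno_dv F) (fno_kmax F) N l v) (fno_lift F u) (fno_layers F)
      in \<Sum>i<fno_dv F. fno_Q F i * v x i)"

definition fno_depth :: "fno \<Rightarrow> nat" where
  "fno_depth F = length (fno_layers F)"

text \<open>Size = number of tunable (real) parameters; complex parameters count twice.\<close>
definition fno_size :: "fno \<Rightarrow> nat" where
  "fno_size F =
     (let m = fno_width F; d = fno_dv F; K = 2 * fno_kmax F + 1 in
      2 * m + m + d * m + d
      + fno_depth F * (d * d + 2 * K * d * d + 2 * K * d)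
      + d)"

definition per_ind :: "real \<Rightarrow> real \<Rightarrow> real" where
  "per_ind w t = (if \<exists>k::int. \<bar>t - 2 * pi * of_int k\<bar> \<le> w / 2 then 1 else 0)"

end

theory Submission imports Defs begin

text \<open>A ReLU pair in the lifting clips \<open>u/hl\<close> to \<open>[0, 1]\<close>, which turns a pulse of height
  \<open>h \<ge> hl\<close> into its bare indicator. The zeroth Fourier mode of a single layer then outputs
  \<open>2\<pi>/N\<close> times the number of grid points covered by the pulse, a Riemann sum for its width
  \<open>w\<close>. Those grid points correspond to the integers in an interval of length \<open>Nw/(2\<pi>) < N\<close>,
  whose number is \<open>Nw/(2\<pi>)\<close> up to an error of one; hence the output is within \<open>2\<pi>/N\<close> of \<open>w\<close>.\<close>

lemma card_Icc_ceiling_floor_approx: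
  fixes a b :: real
  assumes "a \<le> b"
  shows "\<bar>real (card {\<lceil>a\<rceil>..\<lfloor>b\<rfloor>}) - (b - a)\<bar> \<le> 1"
proof -
  have "\<lfloor>b\<rfloor> - \<lceil>a\<rceil> + 1 \<ge> 0"
    using assms floor_correct[of b] ceiling_correct[of a] by linarith
  then have "real (card {\<lceil>a\<rceil>..\<lfloor>b\<rfloor>}) = of_int (\<lfloor>b\<rfloor> - \<lceil>a\<rceil> + 1)"
    by simp
  then show ?thesis
    using floor_correct[of b] ceiling_correct[of a] by linarith
qed

text \<open>The bijection is \<open>n \<mapsto> (n - 1) mod N + 1\<close>; it is injective because the interval is shorter than \<open>N\<close>.\<close>

lemma card_periodic_hits_eq_card_Icc:
  fixes a b :: real and N :: nat
  assumes N: "N \<ge> 1" and short: "b - a < real N"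
  shows "card {j \<in> {1..N}. \<exists>k::int. a \<le> of_int (int j - k * int N) \<and> of_int (int j - k * int N) \<le> b}
         = card {\<lceil>a\<rceil>..\<lfloor>b\<rfloor>}"
    (is "card ?T = card ?S")
proof -
  define f where "f n = nat ((n - 1) mod int N + 1)" for n :: int
  have mem_S: "n \<in> ?S \<longleftrightarrow> a \<le> of_int n \<and> of_int n \<le> b" for n
    by (simp add: ceiling_le_iff le_floor_iff)
  have "inj_on f ?S"
  proof
    fix n n' assume n: "n \<in> ?S" and n': "n' \<in> ?S" and "f n = f n'"
    then have "(n - 1) mod int N = (n' - 1) mod int N"
      using N by (simp add: f_def nat_eq_iff2)
    then have "int N dvd (n - 1) - (n' - 1)"
      by (simp only: mod_eq_dvd_iff)
    then have "int N dvd n - n'" by simp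
    then obtain c where c: "n - n' = int N * c" by (auto simp: dvd_def)
    have "\<bar>real N * of_int c\<bar> < real N"
      using n n' short arg_cong[OF c, of real_of_int] unfolding mem_S by auto
    then have "c = 0"
      using N by (simp add: abs_mult)
    then show "n = n'" using c by simp
  qed
  moreover have "f ` ?S = ?T"
  proof
    show "f ` ?S \<subseteq> ?T"
    proof
      fix j assume "j \<in> f ` ?S"
      then obtain n where n: "n \<in> ?S" and j: "j = f n" by auto
      define q where "q = (n - 1) div int N"
      have r: "0 \<le> (n - 1) mod int N" "(n - 1) mod int N < int N"
        using N by simp_all
      then have jn: "int j = n - q * int N"
        unfolding j f_def q_def by (simp add: minus_div_mult_eq_mod[symmetric])
      have "j \<in> {1..N}"
        using r unfolding j f_def by auto
      moreover have "int j - (- q) * int N \<in> ?S"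
        using n jn by simp
      ultimately show "j \<in> ?T"
        unfolding mem_S by blast
    qed
    show "?T \<subseteq> f ` ?S"
    proof
      fix j assume "j \<in> ?T"
      then obtain k where j: "j \<in> {1..N}" and "int j - k * int N \<in> ?S"
        unfolding mem_S by blast
      moreover have "f (int j - k * int N) = j"
      proof -
        have "int j - k * int N - 1 = (int j - 1) + (- k) * int N" by simp
        then have "(int j - k * int N - 1) mod int N = (int j - 1) mod int N"
          by (simp only: mod_mult_self1)
        also have "\<dots> = int j - 1"
          using j by (simp add: mod_pos_pos_trivial)
        finally show ?thesis
          using j by (simp add: f_def)
      qed
      ultimately show "j \<in> f ` ?S" by force
    qed
  qed
  ultimately show ?thesis
    using card_image by fastforce
qed

lemma grid_pt_near_iff:
  assumes "N \<ge> 1"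
  shows "\<bar>grid_pt N j - \<xi> - 2 * pi * of_int k\<bar> \<le> w / 2 \<longleftrightarrow>
         real N * (\<xi> - w / 2) / (2 * pi) \<le> of_int (int j - k * int N) \<and>
         of_int (int j - k * int N) \<le> real N * (\<xi> + w / 2) / (2 * pi)"
proof -
  let ?t = "2 * pi / real N * of_int (int j - k * int N)"
  have "grid_pt N j - \<xi> - 2 * pi * of_int k = ?t - \<xi>"
    using assms by (simp add: grid_pt_def field_simps)
  then have "\<bar>grid_pt N j - \<xi> - 2 * pi * of_int k\<bar> \<le> w / 2 \<longleftrightarrow> \<xi> - w / 2 \<le> ?t \<and> ?t \<le> \<xi> + w / 2"
    by (simp only: abs_le_iff) linarith
  also have "\<dots> \<longleftrightarrow> real N * (\<xi> - w / 2) / (2 * pi) \<le> of_int (int j - k * int N) \<and>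
         of_int (int j - k * int N) \<le> real N * (\<xi> + w / 2) / (2 * pi)"
    using assms pi_gt_zero by (simp add: field_simps)
  finally show ?thesis .
qed

lemma sum_per_ind_grid_eq_card:
  "(\<Sum>j = 1..N. per_ind w (grid_pt N j - \<xi>)) =
   real (card {j \<in> {1..N}. \<exists>k::int. \<bar>grid_pt N j - \<xi> - 2 * pi * of_int k\<bar> \<le> w / 2})"
  unfolding per_ind_def by (simp add: sum.If_cases Int_def)

theorem grid_mean_per_ind_approx:
  assumes N: "N \<ge> 1" and w: "0 \<le> w" "w < 2 * pi"
  shows "\<bar>2 * pi / real N * (\<Sum>j = 1..N. per_ind w (grid_pt N j - \<xi>)) - w\<bar> \<le> 2 * pi / real N"
proof -
  define a where "a = real N * (\<xi> - w / 2) / (2 * pi)"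
  define b where "b = real N * (\<xi> + w / 2) / (2 * pi)"
  have ba: "b - a = real N * w / (2 * pi)"
    by (simp add: a_def b_def field_simps)
  have "0 \<le> b - a" "b - a < real N"
    unfolding ba using N w pi_gt_zero by (simp_all add: field_simps)
  have "(\<Sum>j = 1..N. per_ind w (grid_pt N j - \<xi>)) = real (card {\<lceil>a\<rceil>..\<lfloor>b\<rfloor>})"
    unfolding sum_per_ind_grid_eq_card grid_pt_near_iff[OF N] a_def[symmetric] b_def[symmetric]
    using card_periodic_hits_eq_card_Icc[OF N \<open>b - a < real N\<close>] by simp
  moreover have "\<bar>real (card {\<lceil>a\<rceil>..\<lfloor>b\<rfloor>}) - real N * w / (2 * pi)\<bar> \<le> 1"
    using card_Icc_ceiling_floor_approx[of a b] \<open>0 \<le> b - a\<close> ba by simp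
  ultimately show ?thesis
    using N pi_gt_zero by (simp add: field_simps abs_mult[symmetric] abs_le_iff)
qed

definition pulse_width_fno :: "real \<Rightarrow> fno" where
  "pulse_width_fno hl = \<lparr>fno_dv = 1, fno_kmax = 0, fno_width = 2,
     fno_A = (\<lambda>j i. if i = 0 then 1 / hl else 0),
     fno_a = (\<lambda>j. if j = 0 then 0 else -1),
     fno_B = (\<lambda>i j. if j = 0 then 1 else -1),
     fno_c = (\<lambda>_. 0),
     fno_layers = [(\<lambda>_ _. 0, \<lambda>_ _ _. complex_of_real (2 * pi), \<lambda>_ _. 0)],
     fno_Q = (\<lambda>_. 1)\<rparr>"

lemma dft_zero: "dft N v 0 = complex_of_real (1 / real N * (\<Sum>j = 1..N. v (grid_pt N j)))"
  by (simp add: dft_def)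

lemma fno_eval_pulse_width_fno:
  "fno_eval (pulse_width_fno hl) N u x =
   relu (2 * pi * (1 / real N * (\<Sum>j = 1..N. fno_lift (pulse_width_fno hl) u (grid_pt N j) 0)))"
  by (simp add: fno_eval_def fno_layer_def pulse_width_fno_def dft_zero del: of_real_mult)

lemma fno_lift_pulse_width_fno:
  assumes "0 < hl" "hl \<le> h" "q y \<in> {0, 1}"
  shows "fno_lift (pulse_width_fno hl) (\<lambda>t. h * q t) y 0 = q y"
  using assms
  by (auto simp: fno_lift_def pulse_width_fno_def relu_def numeral_2_eq_2 lessThan_Suc field_simps)

lemma pulse_width_fno_dimensions:
  "fno_kmax (pulse_width_fno hl) = 0" "fno_dv (pulse_width_fno hl) = 1"
  "fno_depth (pulse_width_fno hl) = 1" "fno_size (pulse_width_fno hl) = 15"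
  by (simp_all add: fno_size_def fno_depth_def pulse_width_fno_def)

lemma fno_eval_pulse_width_fno_per_ind:
  assumes "0 < hl" "hl \<le> h"
  shows "fno_eval (pulse_width_fno hl) N (\<lambda>t. h * per_ind w (t - \<xi>)) x =
         2 * pi / real N * (\<Sum>j = 1..N. per_ind w (grid_pt N j - \<xi>))"
proof -
  have "fno_lift (pulse_width_fno hl) (\<lambda>t. h * per_ind w (t - \<xi>)) y 0 = per_ind w (y - \<xi>)" for y
    using fno_lift_pulse_width_fno[of hl h "\<lambda>t. per_ind w (t - \<xi>)"] assms
    by (simp add: per_ind_def)
  moreover have "0 \<le> (\<Sum>j = 1..N. per_ind w (grid_pt N j - \<xi>))"
    by (simp add: sum_nonneg per_ind_def)
  ultimately show ?thesis
    by (simp add: fno_eval_pulse_width_fno relu_def)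
qed

theorem mainTheorem12:
  fixes hl hu wl wu :: real
  assumes "0 < hl" "hl < hu" "0 < wl" "wl < wu" "wu < 2 * pi"
  shows "\<exists>C::real. C > 0 \<and>
    (\<forall>N::nat. N \<ge> 1 \<longrightarrow>
      (\<exists>F::fno. fno_kmax F = 0 \<and> real (fno_dv F) \<le> C \<and> real (fno_depth F) \<le> C
         \<and> real (fno_size F) \<le> C
         \<and> (\<forall>u x y. fno_eval F N u x = fno_eval F N u y)
         \<and> (\<forall>h w \<xi>. hl \<le> h \<and> h \<le> hu \<and> wl \<le> w \<and> w \<le> wu \<and> 0 \<le> \<xi> \<and> \<xi> \<le> 2 * pi \<longrightarrow>
              (\<forall>x. \<bar>fno_eval F N (\<lambda>t. h * per_ind w (t - \<xi>)) x - w\<bar> \<le> C / real N))))"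
proof (intro exI[of _ 16] conjI allI impI exI[of _ "pulse_width_fno hl"])
  fix N :: nat and h w \<xi> x :: real
  assume N: "N \<ge> 1" and H: "hl \<le> h \<and> h \<le> hu \<and> wl \<le> w \<and> w \<le> wu \<and> 0 \<le> \<xi> \<and> \<xi> \<le> 2 * pi"
  have "\<bar>fno_eval (pulse_width_fno hl) N (\<lambda>t. h * per_ind w (t - \<xi>)) x - w\<bar> \<le> 2 * pi / real N"
    using fno_eval_pulse_width_fno_per_ind[of hl h] grid_mean_per_ind_approx[OF N, of w] H assms
    by simp
  also have "\<dots> \<le> 16 / real N"
    using N pi_less_4 by (simp add: divide_right_mono)
  finally show "\<bar>fno_eval (pulse_width_fno hl) N (\<lambda>t. h * per_ind w (t - \<xi>)) x - w\<bar> \<le> 16 / real N" .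
qed (simp_all add: fno_eval_pulse_width_fno pulse_width_fno_dimensions)

end
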